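(* Let $n\in\{2,3\}$, $d\ge1$, $p\in\mathcal H(n,d)$, let $P=S\cdot Q$ be the induced homogeneous polynomial and $K$ the support of the Newton diagram of $Q$. Then $K$ has no overhang.
   Context: $s(x)=x_1+\dots+x_n$. $\mathcal H(n,d)$ is the set of $p\in\mathbb R[x_1,\dots,x_n]$ of degree $d$ with all coefficients nonnegative and $p(x)=1$ whenever $s(x)=1$. Writing $p=\sum_{k=0}^dp_k$ with $p_k$ homogeneous of degree $k$, the induced homogeneous polynomial is $P(X_0,\dots,X_n)=\sum_{k=0}^dp_k(X_1,\dots,X_n)(-X_0)^{d-k}-(-X_0)^d$; it vanishes where $S(X)=X_0+\dots+X_n=0$, so $P=SQ$. The Newton diagram of $Q$ assigns to $m\in\mathbb Z^n$ the value $P$, $0$, or $N$ according as the coefficient of $X_0^{d-1-|m|}X_1^{m_1}\cdots X_n^{m_n}$ in $Q$ is positive, zero (including when some exponent is negative), or negative ($|m|=m_1+\dots+m_n$); its support $K$ is the set of $m$ with nonzero value. Overhangs: for $K\subset\mathbb Z^2$, a point $(a,b)\in K$ with $(a,b)\ne(0,0)$ is a left overhang if $(a,b-1)\notin K$ and $(a-1,y)\notin K$ for all $y\ge b$; it is a right overhang if $(a-1,b)\notin K$ and $(x,b-1)\notin K$ for all $x\ge a$; an overhang is a left or right overhang. For $K\subset\mathbb Z^3$ define $\pi_1(m)=(m_1,m_2+m_3)$, $\pi_2(m)=(m_1+m_3,m_2)$, $\pi_3(m)=(m_1+m_2,m_3)$; $m\in K$ is an overhang if $\pi_j(m)$ is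 an overhang of $\pi_j(K)$ for some $j$. *)

theory Defs
  imports Complex_Main "HOL-Library.Poly_Mapping"
begin

text \<open>Multivariate real polynomials in variables X_0, X_1, X_2, ... are represented as
  finitely supported maps from monomials (exponent vectors nat =>0 nat) to coefficients.\<close>

type_synonym mpoly = "(nat \<Rightarrow>\<^sub>0 nat) \<Rightarrow>\<^sub>0 real"

definition Var :: "nat \<Rightarrow> mpoly" where
  "Var i = Poly_Mapping.single (Poly_Mapping.single i 1) 1"

definition tdeg :: "(nat \<Rightarrow>\<^sub>0 nat) \<Rightarrow> nat" where
  "tdeg m = (\<Sum>i\<in>Poly_Mapping.keys m. Poly_Mapping.lookup m i)"

definition peval :: "mpoly \<Rightarrow> (nat \<Rightarrow> real) \<Rightarrow> real" where
  "peval p x = (\<Sum>m\<in>Poly_Mapping.keys p. Poly_Mapping.lookup p m * (\<Prod>i\<in>Poly_Mapping.keys m. x i ^ Poly_Mapping.lookup m i))"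

definition in_vars_deg :: "nat \<Rightarrow> nat \<Rightarrow> mpoly \<Rightarrow> bool" where
  "in_vars_deg n d p \<longleftrightarrow> (\<forall>m\<in>Poly_Mapping.keys p. Poly_Mapping.keys m \<subseteq> {1..n} \<and> tdeg m \<le> d)
                         \<and> (\<exists>m\<in>Poly_Mapping.keys p. tdeg m = d)"

definition Hclass :: "nat \<Rightarrow> nat \<Rightarrow> mpoly set" where
  "Hclass n d = {p. in_vars_deg n d p \<and> (\<forall>m. Poly_Mapping.lookup p m \<ge> 0)
      \<and> (\<forall>x::nat \<Rightarrow> real. (\<Sum>i=1..n. x i) = 1 \<longrightarrow> peval p x = 1)}"

definition hpart :: "nat \<Rightarrow> mpoly \<Rightarrow> mpoly" where
  "hpart k p = (\<Sum>m\<in>{m\<in>Poly_Mapping.keys p. tdeg m = k}. Poly_Mapping.single m (Poly_Mapping.lookup p m))"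

definition induced :: "nat \<Rightarrow> mpoly \<Rightarrow> mpoly" where
  "induced d p = (\<Sum>k=0..d. hpart k p * (- Var 0) ^ (d - k)) - (- Var 0) ^ d"

definition Ssum :: "nat \<Rightarrow> mpoly" where
  "Ssum n = (\<Sum>i=0..n. Var i)"

text \<open>Coefficient of X_0^(d-1-|m|) X_1^(m_1) ... X_n^(m_n) in Q, zero if some exponent negative\<close>
definition ndcoeff :: "nat \<Rightarrow> mpoly \<Rightarrow> (nat \<Rightarrow> int) \<Rightarrow> nat \<Rightarrow> real" where
  "ndcoeff d Q m n =
     (if (\<forall>i\<in>{1..n}. m i \<ge> 0) \<and> (\<Sum>i=1..n. m i) \<le> int d - 1
      then Poly_Mapping.lookup Q (Poly_Mapping.single 0 (nat (int d - 1 - (\<Sum>i=1..n. m i)))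
                     + (\<Sum>i=1..n. Poly_Mapping.single i (nat (m i))))
      else 0)"

definition K2 :: "nat \<Rightarrow> mpoly \<Rightarrow> (int \<times> int) set" where
  "K2 d Q = {(a, b). ndcoeff d Q (\<lambda>i. if i = 1 then a else if i = 2 then b else 0) 2 \<noteq> 0}"

definition K3 :: "nat \<Rightarrow> mpoly \<Rightarrow> (int \<times> int \<times> int) set" where
  "K3 d Q = {(a, b, c). ndcoeff d Q
     (\<lambda>i. if i = 1 then a else if i = 2 then b else if i = 3 then c else 0) 3 \<noteq> 0}"

definition left_overhang :: "(int \<times> int) set \<Rightarrow> int \<times> int \<Rightarrow> bool" where
  "left_overhang K z = (case z of (a, b) \<Rightarrow>
     (a, b) \<in> K \<and> (a, b) \<noteq> (0, 0) \<and> (a, b - 1) \<notin> K \<and> (\<forall>y\<ge>b. (a - 1, y) \<notin> K))"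

definition right_overhang :: "(int \<times> int) set \<Rightarrow> int \<times> int \<Rightarrow> bool" where
  "right_overhang K z = (case z of (a, b) \<Rightarrow>
     (a, b) \<in> K \<and> (a, b) \<noteq> (0, 0) \<and> (a - 1, b) \<notin> K \<and> (\<forall>x\<ge>a. (x, b - 1) \<notin> K))"

definition overhang2 :: "(int \<times> int) set \<Rightarrow> int \<times> int \<Rightarrow> bool" where
  "overhang2 K z \<longleftrightarrow> left_overhang K z \<or> right_overhang K z"

definition proj1 :: "int \<times> int \<times> int \<Rightarrow> int \<times> int" where
  "proj1 m = (case m of (m1, m2, m3) \<Rightarrow> (m1, m2 + m3))"
definition proj2 :: "int \<times> int \<times> int \<Rightarrow> int \<times> int" where
  "proj2 m = (case m of (m1, m2, m3) \<Rightarrow> (m1 + m3, m2))"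
definition proj3 :: "int \<times> int \<times> int \<Rightarrow> int \<times> int" where
  "proj3 m = (case m of (m1, m2, m3) \<Rightarrow> (m1 + m2, m3))"

definition overhang3 :: "(int \<times> int \<times> int) set \<Rightarrow> int \<times> int \<times> int \<Rightarrow> bool" where
  "overhang3 K m \<longleftrightarrow> m \<in> K \<and>
     (overhang2 (proj1 ` K) (proj1 m) \<or> overhang2 (proj2 ` K) (proj2 m)
      \<or> overhang2 (proj3 ` K) (proj3 m))"

end

theory Submission
  imports Defs
begin

text \<open>
  Write \<open>N(m)\<close> for the Newton-diagram coefficient of \<open>Q\<close> at \<open>m \<in> \<int>\<^sup>n\<close> and
  put \<open>T(m) = (-1)^{d-|m|} N(m)\<close>.  Comparing the coefficients of \<open>X_0^{d-|m|}X^m\<close> on both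
  sides of \<open>P = S Q\<close> gives \<open>N(m) + \<Sum>\<^sub>i N(m - e\<^sub>i) = (-1)^{d-|m|} p\<^sub>m\<close> for \<open>m \<noteq> 0\<close>; since the
  coefficients of \<open>p\<close> are nonnegative this says \<open>\<Sum>\<^sub>i T(m - e\<^sub>i) \<le> T(m)\<close>, and \<open>T\<close> vanishes
  outside the simplex \<open>{m \<ge> 0, |m| < d}\<close>.

  The first part of the file shows, for an arbitrary such superadditive array \<open>T\<close> on a
  finite index set \<open>I = A \<union> B\<close>, that the image of its support under
  \<open>m \<mapsto> (\<Sum>\<^sub>A m, \<Sum>\<^sub>B m)\<close> has no overhang: at a left overhang \<open>(a, b)\<close>, \<open>T\<close> is \<open>\<ge> 0\<close> on the
  ray \<open>{\<Sum>\<^sub>A m = a, \<Sum>\<^sub>B m \<ge> b}\<close> (induction upwards from the hole below) and \<open>\<le> 0\<close> there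
  (induction downwards from the boundary \<open>|m| = d\<close>), hence zero; right overhangs follow by
  swapping the roles of \<open>A\<close> and \<open>B\<close>.
\<close>

definition unit_vec :: "nat \<Rightarrow> nat \<Rightarrow> int" where
  "unit_vec i = (\<lambda>j. if j = i then 1 else 0)"

lemma sum_minus_unit_vec:
  "finite S \<Longrightarrow> (\<Sum>j\<in>S. m j - unit_vec i j) = (\<Sum>j\<in>S. m j) - (if i \<in> S then 1 else 0)"
  by (simp add: unit_vec_def sum_subtractf)

lemma sum_plus_unit_vec:
  "finite S \<Longrightarrow> (\<Sum>j\<in>S. m j + unit_vec i j) = (\<Sum>j\<in>S. m j) + (if i \<in> S then 1 else 0)"
  by (simp add: unit_vec_def sum.distrib)

lemma right_overhang_swap: "right_overhang K (a, b) \<longleftrightarrow> left_overhang (prod.swap ` K) (b, a)"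
  unfolding left_overhang_def right_overhang_def by (auto simp add: pair_in_swap_image)

locale superadditive_array =
  fixes I :: "nat set" and d :: nat and T :: "(nat \<Rightarrow> int) \<Rightarrow> real"
  assumes finite_I: "finite I"
    and vanish: "\<And>m. (\<exists>i\<in>I. m i < 0) \<or> int d \<le> (\<Sum>i\<in>I. m i) \<Longrightarrow> T m = 0"
    and superadd: "\<And>m. \<forall>i\<in>I. 0 \<le> m i \<Longrightarrow> (\<Sum>i\<in>I. m i) \<le> int d \<Longrightarrow> (\<exists>i\<in>I. m i \<noteq> 0)
                     \<Longrightarrow> (\<Sum>i\<in>I. T (m - unit_vec i)) \<le> T m"
begin

lemma support_in_simplex:
  assumes "T m \<noteq> 0" shows "\<forall>i\<in>I. 0 \<le> m i" and "(\<Sum>i\<in>I. m i) < int d"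
  using vanish assms by force+

context
  fixes A B :: "nat set" and a b :: int
  assumes partition: "A \<union> B = I" "A \<inter> B = {}"
    and gap_left: "\<And>m. (\<Sum>i\<in>A. m i) = a - 1 \<Longrightarrow> b \<le> (\<Sum>i\<in>B. m i) \<Longrightarrow> T m = 0"
    and gap_below: "\<And>m. (\<Sum>i\<in>A. m i) = a \<Longrightarrow> (\<Sum>i\<in>B. m i) = b - 1 \<Longrightarrow> T m = 0"
    and ab_pos: "0 < a + b"
begin

lemma finite_A: "finite A" and finite_B: "finite B"
  using finite_I partition by auto

lemma sum_split: "(\<Sum>i\<in>I. m i) = (\<Sum>i\<in>A. m i) + (\<Sum>i\<in>B. m i)"
  using partition finite_A finite_B by (metis sum.union_disjoint)

lemma ray_nonzero:
  assumes "(\<Sum>i\<in>A. m i) = a" and "b \<le> (\<Sum>i\<in>B. m i)" shows "\<exists>i\<in>I. m i \<noteq> 0"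
proof (rule ccontr)
  assume "\<not> (\<exists>i\<in>I. m i \<noteq> 0)"
  then have "(\<Sum>i\<in>I. m i) = 0" by simp
  then show False using sum_split[of m] assms ab_pos by linarith
qed

text \<open>Upwards along the ray the lower neighbours are either in the gap or on the ray, so
  nonnegativity propagates from the hole below \<open>(a, b)\<close>.\<close>

lemma ray_nonneg:
  assumes "(\<Sum>i\<in>A. m i) = a" and "b \<le> (\<Sum>i\<in>B. m i)" shows "0 \<le> T m"
  using assms
proof (induction "nat ((\<Sum>i\<in>B. m i) - b)" arbitrary: m rule: less_induct)
  case less
  show ?case
  proof (cases "T m = 0")
    case False
    have "0 \<le> T (m - unit_vec i)" if i: "i \<in> I" for i
    proof (cases "i \<in> A")
      case True
      then have "i \<notin> B" using partition by auto
      then show ?thesis using True gap_left[of "m - unit_vec i"] less.prems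
        by (simp add: sum_minus_unit_vec[OF finite_A] sum_minus_unit_vec[OF finite_B])
    next
      case False
      then have "i \<in> B" using i partition by auto
      then have sums: "(\<Sum>j\<in>A. (m - unit_vec i) j) = a" "(\<Sum>j\<in>B. (m - unit_vec i) j) = (\<Sum>j\<in>B. m j) - 1"
        using False less.prems by (simp_all add: sum_minus_unit_vec[OF finite_A] sum_minus_unit_vec[OF finite_B])
      show ?thesis
      proof (cases "(\<Sum>j\<in>B. m j) = b")
        case True
        then show ?thesis using gap_below sums by simp
      next
        case False
        then show ?thesis using less.hyps[of "m - unit_vec i"] less.prems sums by simp
      qed
    qed
    then have "0 \<le> (\<Sum>i\<in>I. T (m - unit_vec i))" by (simp add: sum_nonneg)
    also have "\<dots> \<le> T m"
      using superadd support_in_simplex[OF False] ray_nonzero[OF less.prems] by simp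
    finally show ?thesis .
  qed simp
qed

text \<open>Moving one step up in direction \<open>j \<in> B\<close>: \<open>T(m)\<close> is one of the (nonnegative) lower
  neighbours of \<open>m + e\<^sub>j\<close>, so \<open>T(m) \<le> T(m + e\<^sub>j)\<close>; at the boundary \<open>|m| = d\<close> the array is
  zero.\<close>

lemma ray_nonpos:
  assumes j: "j \<in> B" and "(\<Sum>i\<in>A. m i) = a" and "b \<le> (\<Sum>i\<in>B. m i)" shows "T m \<le> 0"
  using assms(2,3)
proof (induction "nat (int d - (\<Sum>i\<in>I. m i))" arbitrary: m rule: less_induct)
  case less
  show ?case
  proof (cases "T m = 0")
    case False
    define m' where "m' = (\<lambda>k. m k + unit_vec j k)"
    have jA: "j \<notin> A" and jI: "j \<in> I" using j partition by auto
    have sums': "(\<Sum>i\<in>A. m' i) = a" "(\<Sum>i\<in>B. m' i) = (\<Sum>i\<in>B. m i) + 1"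
      "(\<Sum>i\<in>I. m' i) = (\<Sum>i\<in>I. m i) + 1"
      unfolding m'_def using jA j jI less.prems
      by (simp_all add: sum_plus_unit_vec[OF finite_A] sum_plus_unit_vec[OF finite_B] sum_plus_unit_vec[OF finite_I])
    have other_nonneg: "0 \<le> T (m' - unit_vec i)" if i: "i \<in> I" for i
    proof (cases "i \<in> A")
      case True
      then have "i \<notin> B" using partition by auto
      then show ?thesis using True gap_left[of "m' - unit_vec i"] sums' less.prems
        by (simp add: sum_minus_unit_vec[OF finite_A] sum_minus_unit_vec[OF finite_B])
    next
      case False
      then have "i \<in> B" using i partition by auto
      then show ?thesis using False ray_nonneg[of "m' - unit_vec i"] sums' less.prems
        by (simp add: sum_minus_unit_vec[OF finite_A] sum_minus_unit_vec[OF finite_B])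
    qed
    have "m' - unit_vec j = m" unfolding m'_def by (simp add: fun_eq_iff)
    then have "T m \<le> (\<Sum>i\<in>I. T (m' - unit_vec i))"
      using member_le_sum[OF jI _ finite_I, of "\<lambda>i. T (m' - unit_vec i)"] other_nonneg by simp
    also have "\<dots> \<le> T m'"
      using superadd[of m'] support_in_simplex[OF False] sums' ray_nonzero[of m'] less.prems
      unfolding m'_def by (auto simp: unit_vec_def)
    also have "\<dots> \<le> 0"
      using less.hyps[of m'] less.prems sums' support_in_simplex[OF False] by simp
    finally show ?thesis .
  qed simp
qed

lemma ray_vanishes:
  assumes "j \<in> B" and "(\<Sum>i\<in>A. m i) = a" and "b \<le> (\<Sum>i\<in>B. m i)" shows "T m = 0"
  using ray_nonneg[OF assms(2,3)] ray_nonpos[OF assms] by simp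

end

lemma no_left_overhang:
  assumes partition: "A \<union> B = I" "A \<inter> B = {}" and "B \<noteq> {}"
    and support: "\<And>m. T m \<noteq> 0 \<Longrightarrow> ((\<Sum>i\<in>A. m i), (\<Sum>i\<in>B. m i)) \<in> L"
    and T_m0: "T m0 \<noteq> 0"
  shows "\<not> left_overhang L ((\<Sum>i\<in>A. m0 i), (\<Sum>i\<in>B. m0 i))"
proof
  define a where "a = (\<Sum>i\<in>A. m0 i)"
  define b where "b = (\<Sum>i\<in>B. m0 i)"
  assume "left_overhang L ((\<Sum>i\<in>A. m0 i), (\<Sum>i\<in>B. m0 i))"
  then have nonzero: "(a, b) \<noteq> (0, 0)" and below: "(a, b - 1) \<notin> L"
    and left: "\<forall>y\<ge>b. (a - 1, y) \<notin> L"
    unfolding left_overhang_def a_def b_def by auto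
  have "0 \<le> a" "0 \<le> b"
    using support_in_simplex(1)[OF T_m0] partition unfolding a_def b_def
    by (auto intro!: sum_nonneg)
  then have "0 < a + b" using nonzero by auto
  moreover obtain j where "j \<in> B" using \<open>B \<noteq> {}\<close> by blast
  ultimately have "T m0 = 0"
    using ray_vanishes[OF partition, of a b j m0] support below left unfolding a_def b_def by force
  then show False using T_m0 by simp
qed

lemma no_overhang:
  assumes partition: "A \<union> B = I" "A \<inter> B = {}" and "A \<noteq> {}" "B \<noteq> {}"
    and support: "\<And>m. T m \<noteq> 0 \<Longrightarrow> ((\<Sum>i\<in>A. m i), (\<Sum>i\<in>B. m i)) \<in> L"
    and T_m0: "T m0 \<noteq> 0"
  shows "\<not> overhang2 L ((\<Sum>i\<in>A. m0 i), (\<Sum>i\<in>B. m0 i))"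
proof -
  have "\<not> left_overhang L ((\<Sum>i\<in>A. m0 i), (\<Sum>i\<in>B. m0 i))"
    using no_left_overhang[OF partition \<open>B \<noteq> {}\<close> support T_m0] .
  moreover have "\<not> left_overhang (prod.swap ` L) ((\<Sum>i\<in>B. m0 i), (\<Sum>i\<in>A. m0 i))"
  proof (rule no_left_overhang[OF _ _ \<open>A \<noteq> {}\<close> _ T_m0])
    show "B \<union> A = I" "B \<inter> A = {}" using partition by auto
  next
    fix m assume "T m \<noteq> 0"
    then show "((\<Sum>i\<in>B. m i), (\<Sum>i\<in>A. m i)) \<in> prod.swap ` L"
      using support by (simp add: pair_in_swap_image)
  qed
  ultimately show ?thesis unfolding overhang2_def right_overhang_swap by blast
qed

end

lemma lookup_monomial_mult:
  fixes \<mu> \<alpha> :: "nat \<Rightarrow>\<^sub>0 nat"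
  shows "Poly_Mapping.lookup (Poly_Mapping.single \<mu> (c::real) * q) \<alpha> =
     (if (\<exists>r. \<alpha> = \<mu> + r) then c * Poly_Mapping.lookup q (\<alpha> - \<mu>) else 0)"
proof -
  have conv: "Poly_Mapping.lookup (Poly_Mapping.single \<mu> c * q) \<alpha> =
     c * (\<Sum>r. Poly_Mapping.lookup q r when \<alpha> = \<mu> + r)"
    unfolding lookup_mult lookup_single by (simp only: when_mult Sum_any_when_equal')
  show ?thesis
  proof (cases "\<exists>r. \<alpha> = \<mu> + r")
    case True
    then obtain r0 where r0: "\<alpha> = \<mu> + r0" by blast
    have "\<And>r. (\<alpha> = \<mu> + r) = (r = r0)" unfolding r0 add_left_cancel by (rule eq_commute)
    then have "(\<Sum>r. Poly_Mapping.lookup q r when \<alpha> = \<mu> + r) = Poly_Mapping.lookup q r0" by simp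
    then show ?thesis using conv True r0 by simp
  next
    case False
    then show ?thesis using conv by simp
  qed
qed

lemma exists_add_single_iff:
  "(\<exists>r. (\<alpha>::nat \<Rightarrow>\<^sub>0 nat) = Poly_Mapping.single i f + r) \<longleftrightarrow> f \<le> Poly_Mapping.lookup \<alpha> i"
proof
  assume "\<exists>r. \<alpha> = Poly_Mapping.single i f + r"
  then show "f \<le> Poly_Mapping.lookup \<alpha> i" by (auto simp: lookup_add)
next
  assume "f \<le> Poly_Mapping.lookup \<alpha> i"
  then have "\<alpha> = Poly_Mapping.single i f + (\<alpha> - Poly_Mapping.single i f)"
    by (intro poly_mapping_eqI) (auto simp: lookup_add lookup_minus lookup_single when_def)
  then show "\<exists>r. \<alpha> = Poly_Mapping.single i f + r" by blast
qed

lemma lookup_var_power_mult: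
  fixes \<alpha> :: "nat \<Rightarrow>\<^sub>0 nat"
  shows "Poly_Mapping.lookup (Poly_Mapping.single (Poly_Mapping.single i f) (c::real) * q) \<alpha> =
     (if f \<le> Poly_Mapping.lookup \<alpha> i then c * Poly_Mapping.lookup q (\<alpha> - Poly_Mapping.single i f) else 0)"
  using exists_add_single_iff[of \<alpha> i f] by (simp add: lookup_monomial_mult)

lemma lookup_Var_mult:
  "Poly_Mapping.lookup (Var i * q) \<alpha> =
     (if 1 \<le> Poly_Mapping.lookup \<alpha> i then Poly_Mapping.lookup q (\<alpha> - Poly_Mapping.single i 1) else 0)"
  unfolding Var_def lookup_var_power_mult by simp

lemma lookup_Ssum_mult:
  "Poly_Mapping.lookup (Ssum n * q) \<alpha> = (\<Sum>i=0..n.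
     if 1 \<le> Poly_Mapping.lookup \<alpha> i then Poly_Mapping.lookup q (\<alpha> - Poly_Mapping.single i 1) else 0)"
  unfolding Ssum_def sum_distrib_right lookup_sum lookup_Var_mult ..

lemma neg_Var0_power: "(- Var 0) ^ e = Poly_Mapping.single (Poly_Mapping.single 0 e) ((-1::real) ^ e)"
proof (induction e)
  case (Suc e)
  have "(- Var 0) ^ Suc e = Poly_Mapping.single (Poly_Mapping.single 0 e) ((-1::real) ^ e) * (- Var 0)"
    using Suc by (simp add: power_Suc2)
  also have "\<dots> = Poly_Mapping.single (Poly_Mapping.single 0 e + Poly_Mapping.single 0 1) ((-1::real) ^ e * (-1))"
    unfolding Var_def single_uminus[symmetric] mult_single ..
  also have "\<dots> = Poly_Mapping.single (Poly_Mapping.single 0 (Suc e)) ((-1::real) ^ Suc e)"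
    by (simp add: single_add[symmetric])
  finally show ?case .
qed simp

lemma lookup_hpart:
  "Poly_Mapping.lookup (hpart k p) \<mu> = (if tdeg \<mu> = k then Poly_Mapping.lookup p \<mu> else 0)"
  unfolding hpart_def lookup_sum lookup_single by (auto simp: when_def in_keys_iff)

text \<open>The exponent vector of \<open>X_1^{m_1}\<cdots>X_n^{m_n}\<close>, and that of the monomial
  \<open>X_0^{e-|m|} X_1^{m_1}\<cdots>X_n^{m_n}\<close> of total degree \<open>e\<close> which carries the
  Newton-diagram coefficient at \<open>m\<close> (with \<open>e = d - 1\<close> for \<open>Q\<close> and \<open>e = d\<close> for \<open>P\<close>).\<close>

definition exps :: "nat \<Rightarrow> (nat \<Rightarrow> int) \<Rightarrow> (nat \<Rightarrow>\<^sub>0 nat)" where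
  "exps n m = (\<Sum>i=1..n. Poly_Mapping.single i (nat (m i)))"

definition diag_exp :: "nat \<Rightarrow> nat \<Rightarrow> (nat \<Rightarrow> int) \<Rightarrow> (nat \<Rightarrow>\<^sub>0 nat)" where
  "diag_exp e n m = Poly_Mapping.single 0 (nat (int e - (\<Sum>i=1..n. m i))) + exps n m"

lemma lookup_exps: "Poly_Mapping.lookup (exps n m) j = (if j \<in> {1..n} then nat (m j) else 0)"
  unfolding exps_def lookup_sum lookup_single by (auto simp: when_def)

lemma lookup_diag_exp: "Poly_Mapping.lookup (diag_exp e n m) j =
   (if j = 0 then nat (int e - (\<Sum>i=1..n. m i)) else if j \<in> {1..n} then nat (m j) else 0)"
  unfolding diag_exp_def by (auto simp: lookup_add lookup_exps lookup_single when_def)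

lemma tdeg_exps:
  assumes nn: "\<forall>i\<in>{1..n}. 0 \<le> m i"
  shows "int (tdeg (exps n m)) = (\<Sum>i=1..n. m i)"
proof -
  have "Poly_Mapping.keys (exps n m) \<subseteq> {1..n}"
    by (auto simp: in_keys_iff lookup_exps split: if_splits)
  then have "tdeg (exps n m) = (\<Sum>i\<in>{1..n}. Poly_Mapping.lookup (exps n m) i)"
    unfolding tdeg_def by (intro sum.mono_neutral_left) (auto simp: in_keys_iff)
  then have "int (tdeg (exps n m)) = (\<Sum>i\<in>{1..n}. int (nat (m i)))" by (simp add: lookup_exps)
  also have "\<dots> = (\<Sum>i\<in>{1..n}. m i)" using nn by (intro sum.cong) auto
  finally show ?thesis .
qed

lemma ndcoeff_diag_exp: "ndcoeff d Q m n =
     (if (\<forall>i\<in>{1..n}. 0 \<le> m i) \<and> (\<Sum>i=1..n. m i) \<le> int d - 1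
      then Poly_Mapping.lookup Q (diag_exp (d - 1) n m) else 0)"
proof (cases "(\<forall>i\<in>{1..n}. 0 \<le> m i) \<and> (\<Sum>i=1..n. m i) \<le> int d - 1")
  case True
  then have "0 \<le> (\<Sum>i=1..n. m i)" by (intro sum_nonneg) auto
  then have "int (d - 1) = int d - 1" using True by linarith
  then show ?thesis unfolding ndcoeff_def diag_exp_def exps_def by simp
qed (auto simp: ndcoeff_def)

lemma ndcoeff_cong:
  assumes "\<And>i. i \<in> {1..n} \<Longrightarrow> m i = m' i" shows "ndcoeff d Q m n = ndcoeff d Q m' n"
proof -
  have "(\<Sum>i=1..n. m i) = (\<Sum>i=1..n. m' i)" using assms by (intro sum.cong) auto
  moreover have "(\<Sum>i=1..n. Poly_Mapping.single i (nat (m i))) = (\<Sum>i=1..n. Poly_Mapping.single i (nat (m' i)))"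
    using assms by (intro sum.cong) auto
  moreover have "(\<forall>i\<in>{1..n}. m i \<ge> 0) = (\<forall>i\<in>{1..n}. m' i \<ge> 0)" using assms by auto
  ultimately show ?thesis unfolding ndcoeff_def by simp
qed

text \<open>The coefficient of \<open>X_0^{d-|m|}X^m\<close> in \<open>S Q\<close> collects the diagram coefficient of
  \<open>Q\<close> at \<open>m\<close> (from the factor \<open>X_0\<close>) and at each \<open>m - e_i\<close> (from the factor \<open>X_i\<close>).\<close>

lemma coeff_Ssum_mult_X0:
  assumes nn: "\<forall>i\<in>{1..n}. 0 \<le> m i"
  shows "(if 1 \<le> Poly_Mapping.lookup (diag_exp d n m) 0
          then Poly_Mapping.lookup Q (diag_exp d n m - Poly_Mapping.single 0 1) else 0)
       = ndcoeff d Q m n"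
proof (cases "(\<Sum>i=1..n. m i) < int d")
  case True
  have "0 \<le> (\<Sum>i=1..n. m i)" using nn by (intro sum_nonneg) auto
  then have d1: "int (d - 1) = int d - 1" using True by linarith
  have "diag_exp d n m - Poly_Mapping.single 0 1 = diag_exp (d - 1) n m"
    by (intro poly_mapping_eqI) (use True d1 in \<open>auto simp: lookup_minus lookup_diag_exp lookup_single when_def\<close>)
  moreover have "1 \<le> Poly_Mapping.lookup (diag_exp d n m) 0" using True by (simp add: lookup_diag_exp)
  ultimately show ?thesis using True nn by (simp add: ndcoeff_diag_exp)
qed (simp add: ndcoeff_def lookup_diag_exp)

lemma coeff_Ssum_mult_Xi:
  assumes nn: "\<forall>j\<in>{1..n}. 0 \<le> m j" and le: "(\<Sum>j=1..n. m j) \<le> int d" and i: "i \<in> {1..n}"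
  shows "(if 1 \<le> Poly_Mapping.lookup (diag_exp d n m) i
          then Poly_Mapping.lookup Q (diag_exp d n m - Poly_Mapping.single i 1) else 0)
       = ndcoeff d Q (m - unit_vec i) n"
proof (cases "1 \<le> m i")
  case True
  have "m i \<le> (\<Sum>j=1..n. m j)" by (intro member_le_sum) (use i nn in auto)
  then have d1: "int (d - 1) = int d - 1" using True le by linarith
  have sum_minus: "(\<Sum>j=1..n. m j - unit_vec i j) = (\<Sum>j=1..n. m j) - 1"
    using sum_minus_unit_vec[of "{1..n}" m i] i by simp
  have nn': "\<forall>j\<in>{1..n}. 0 \<le> m j - unit_vec i j" using nn True by (auto simp: unit_vec_def)
  have "diag_exp d n m - Poly_Mapping.single i 1 = diag_exp (d - 1) n (m - unit_vec i)"
    by (intro poly_mapping_eqI)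
       (use True i d1 sum_minus in \<open>auto simp: lookup_minus lookup_diag_exp lookup_single when_def unit_vec_def\<close>)
  moreover have "1 \<le> Poly_Mapping.lookup (diag_exp d n m) i" using True i by (simp add: lookup_diag_exp)
  ultimately show ?thesis using i le nn' sum_minus by (simp add: ndcoeff_diag_exp)
next
  case False
  then have "m i - unit_vec i i < 0" using nn i by (force simp: unit_vec_def)
  then have "ndcoeff d Q (m - unit_vec i) n = 0" using i unfolding ndcoeff_def by force
  then show ?thesis using False i by (simp add: lookup_diag_exp)
qed

lemma coeff_Ssum_mult:
  assumes nn: "\<forall>i\<in>{1..n}. 0 \<le> m i" and le: "(\<Sum>i=1..n. m i) \<le> int d"
  shows "Poly_Mapping.lookup (Ssum n * Q) (diag_exp d n m)
     = ndcoeff d Q m n + (\<Sum>i=1..n. ndcoeff d Q (m - unit_vec i) n)"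
  unfolding lookup_Ssum_mult sum.atLeast_Suc_atMost[OF le0] coeff_Ssum_mult_X0[OF nn]
  using coeff_Ssum_mult_Xi[OF nn le] by simp

text \<open>The coefficient of \<open>X_0^{d-|m|}X^m\<close> in \<open>P\<close>: only the homogeneous part \<open>p_{|m|}\<close>
  contributes, with sign \<open>(-1)^{d-|m|}\<close>, and \<open>(-X_0)^d\<close> contributes at \<open>m = 0\<close>.\<close>

lemma coeff_hpart_term:
  assumes vars: "\<forall>\<mu>\<in>Poly_Mapping.keys p. Poly_Mapping.keys \<mu> \<subseteq> {1..n}"
    and nn: "\<forall>i\<in>{1..n}. 0 \<le> m i" and le: "(\<Sum>i=1..n. m i) \<le> int d" and k: "k \<le> d"
  shows "Poly_Mapping.lookup (hpart k p * (- Var 0) ^ (d - k)) (diag_exp d n m) =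
      (if int k = (\<Sum>i=1..n. m i) then (-1) ^ (d - k) * Poly_Mapping.lookup p (exps n m) else 0)"
proof -
  define s where "s = nat (\<Sum>i=1..n. m i)"
  have s: "(\<Sum>i=1..n. m i) = int s" and tdeg: "tdeg (exps n m) = s"
    using tdeg_exps[OF nn] unfolding s_def by simp_all
  have "s \<le> d" using le unfolding s by simp
  then have X0: "Poly_Mapping.lookup (diag_exp d n m) 0 = d - s"
    unfolding lookup_diag_exp s by (simp add: of_nat_diff[symmetric] del: of_nat_diff)
  have "Poly_Mapping.lookup (hpart k p * (- Var 0) ^ (d - k)) (diag_exp d n m) =
      (if d - k \<le> d - s then (-1) ^ (d - k) *
         Poly_Mapping.lookup (hpart k p) (diag_exp d n m - Poly_Mapping.single 0 (d - k)) else 0)"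
    unfolding neg_Var0_power mult.commute[of "hpart k p"] lookup_var_power_mult X0 ..
  also have "\<dots> = (if k = s then (-1) ^ (d - s) * Poly_Mapping.lookup p (exps n m) else 0)"
  proof (cases "s \<le> k")
    case True
    have shift: "diag_exp d n m - Poly_Mapping.single 0 (d - k) = Poly_Mapping.single 0 (k - s) + exps n m"
      by (intro poly_mapping_eqI)
         (use True k le s in \<open>auto simp: lookup_minus lookup_diag_exp lookup_exps lookup_add lookup_single when_def\<close>)
    show ?thesis
    proof (cases "k = s")
      case False
      then have "0 \<in> Poly_Mapping.keys (Poly_Mapping.single 0 (k - s) + exps n m)"
        using True by (simp add: in_keys_iff lookup_add lookup_exps)
      then have "Poly_Mapping.single 0 (k - s) + exps n m \<notin> Poly_Mapping.keys p" using vars by fastforce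
      then have "Poly_Mapping.lookup p (Poly_Mapping.single 0 (k - s) + exps n m) = 0"
        by (simp add: in_keys_iff)
      then show ?thesis using shift False by (simp add: lookup_hpart)
    qed (use shift le s in \<open>simp add: lookup_hpart tdeg\<close>)
  qed (use k le s in auto)
  finally show ?thesis unfolding s by simp
qed

lemma coeff_neg_X0_power:
  assumes nn: "\<forall>i\<in>{1..n}. 0 \<le> m i"
  shows "Poly_Mapping.lookup ((- Var 0) ^ d) (diag_exp d n m) = (if \<forall>i\<in>{1..n}. m i = 0 then (-1) ^ d else 0)"
proof (cases "\<forall>i\<in>{1..n}. m i = 0")
  case True
  then have "diag_exp d n m = Poly_Mapping.single 0 d"
    by (intro poly_mapping_eqI) (auto simp: lookup_diag_exp lookup_single when_def)
  then show ?thesis using True by (simp add: neg_Var0_power)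
next
  case False
  then obtain i where "i \<in> {1..n}" "m i \<noteq> 0" by blast
  then have "Poly_Mapping.lookup (diag_exp d n m) i \<noteq> Poly_Mapping.lookup (Poly_Mapping.single 0 d) i"
    using nn by (force simp: lookup_diag_exp lookup_single when_def)
  then have "Poly_Mapping.single 0 d \<noteq> diag_exp d n m" by metis
  then show ?thesis using False by (simp add: neg_Var0_power lookup_single)
qed

lemma coeff_induced:
  assumes p: "p \<in> Hclass n d" and nn: "\<forall>i\<in>{1..n}. 0 \<le> m i" and le: "(\<Sum>i=1..n. m i) \<le> int d"
  shows "Poly_Mapping.lookup (induced d p) (diag_exp d n m)
     = (-1) ^ nat (int d - (\<Sum>i=1..n. m i)) * Poly_Mapping.lookup p (exps n m)
       - (if \<forall>i\<in>{1..n}. m i = 0 then (-1) ^ d else 0)"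
proof -
  define s where "s = nat (\<Sum>i=1..n. m i)"
  have s: "(\<Sum>i=1..n. m i) = int s" using tdeg_exps[OF nn] unfolding s_def by simp
  have "s \<le> d" using le unfolding s by simp
  have vars: "\<forall>\<mu>\<in>Poly_Mapping.keys p. Poly_Mapping.keys \<mu> \<subseteq> {1..n}"
    using p unfolding Hclass_def in_vars_deg_def by blast
  have hpart_term: "Poly_Mapping.lookup (hpart k p * (- Var 0) ^ (d - k)) (diag_exp d n m) =
      (if k = s then (-1) ^ (d - s) * Poly_Mapping.lookup p (exps n m) else 0)" if "k \<in> {0..d}" for k
    using coeff_hpart_term[OF vars nn le, of k] that unfolding s by auto
  have "Poly_Mapping.lookup (induced d p) (diag_exp d n m) =
      (\<Sum>k=0..d. Poly_Mapping.lookup (hpart k p * (- Var 0) ^ (d - k)) (diag_exp d n m))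
      - Poly_Mapping.lookup ((- Var 0) ^ d) (diag_exp d n m)"
    unfolding induced_def lookup_minus lookup_sum ..
  also have "\<dots> = (\<Sum>k=0..d. if k = s then (-1) ^ (d - s) * Poly_Mapping.lookup p (exps n m) else 0)
      - (if \<forall>i\<in>{1..n}. m i = 0 then (-1) ^ d else 0)"
    unfolding coeff_neg_X0_power[OF nn] by (simp only: sum.cong[OF refl hpart_term])
  also have "\<dots> = (-1) ^ (d - s) * Poly_Mapping.lookup p (exps n m)
      - (if \<forall>i\<in>{1..n}. m i = 0 then (-1) ^ d else 0)"
    using \<open>s \<le> d\<close> by simp
  finally show ?thesis
    unfolding s using \<open>s \<le> d\<close> by (simp add: of_nat_diff[symmetric] del: of_nat_diff)
qed

lemma diagram_recursion:
  assumes p: "p \<in> Hclass n d" and PQ: "induced d p = Ssum n * Q"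
    and nn: "\<forall>i\<in>{1..n}. 0 \<le> m i" and le: "(\<Sum>i=1..n. m i) \<le> int d" and nz: "\<exists>i\<in>{1..n}. m i \<noteq> 0"
  shows "ndcoeff d Q m n + (\<Sum>i=1..n. ndcoeff d Q (m - unit_vec i) n)
       = (-1) ^ nat (int d - (\<Sum>i=1..n. m i)) * Poly_Mapping.lookup p (exps n m)"
  using coeff_Ssum_mult[OF nn le, of Q] coeff_induced[OF p nn le] nz PQ by auto

text \<open>With the sign \<open>(-1)^{d-|m|}\<close> absorbed, the recursion becomes superadditivity, because
  the coefficients of \<open>p\<close> are nonnegative.\<close>

definition signed_coeff :: "nat \<Rightarrow> mpoly \<Rightarrow> nat \<Rightarrow> (nat \<Rightarrow> int) \<Rightarrow> real" where
  "signed_coeff d Q n m = (-1) ^ nat (int d - (\<Sum>i=1..n. m i)) * ndcoeff d Q m n"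

lemma signed_coeff_nonzero_iff: "signed_coeff d Q n m \<noteq> 0 \<longleftrightarrow> ndcoeff d Q m n \<noteq> 0"
  unfolding signed_coeff_def by simp

lemma signed_coeff_vanish:
  "(\<exists>i\<in>{1..n}. m i < 0) \<or> int d \<le> (\<Sum>i\<in>{1..n}. m i) \<Longrightarrow> signed_coeff d Q n m = 0"
  unfolding signed_coeff_def ndcoeff_def by auto

lemma signed_coeff_superadd:
  assumes p: "p \<in> Hclass n d" and PQ: "induced d p = Ssum n * Q"
    and nn: "\<forall>i\<in>{1..n}. 0 \<le> m i" and le: "(\<Sum>i\<in>{1..n}. m i) \<le> int d" and nz: "\<exists>i\<in>{1..n}. m i \<noteq> 0"
  shows "(\<Sum>i\<in>{1..n}. signed_coeff d Q n (m - unit_vec i)) \<le> signed_coeff d Q n m"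
proof -
  define e where "e = nat (int d - (\<Sum>i=1..n. m i))"
  define \<sigma> :: real where "\<sigma> = (-1) ^ e"
  have \<sigma>_sq: "\<sigma> * \<sigma> = 1" unfolding \<sigma>_def by (simp flip: power_add)
  have neighbour: "signed_coeff d Q n (m - unit_vec i) = - \<sigma> * ndcoeff d Q (m - unit_vec i) n"
    if "i \<in> {1..n}" for i
  proof -
    have "nat (int d - (\<Sum>j=1..n. (m - unit_vec i) j)) = Suc e"
      using le that sum_minus_unit_vec[of "{1..n}" m i] unfolding e_def by simp
    then show ?thesis unfolding signed_coeff_def \<sigma>_def by simp
  qed
  have "(\<Sum>i\<in>{1..n}. signed_coeff d Q n (m - unit_vec i)) = - \<sigma> * (\<Sum>i=1..n. ndcoeff d Q (m - unit_vec i) n)"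
    unfolding sum_distrib_left using neighbour by (intro sum.cong) simp_all
  also have "\<dots> = - \<sigma> * (\<sigma> * Poly_Mapping.lookup p (exps n m) - ndcoeff d Q m n)"
  proof -
    have "(\<Sum>i=1..n. ndcoeff d Q (m - unit_vec i) n) = \<sigma> * Poly_Mapping.lookup p (exps n m) - ndcoeff d Q m n"
      using diagram_recursion[OF p PQ nn le nz] unfolding \<sigma>_def e_def by linarith
    then show ?thesis by simp
  qed
  also have "\<dots> = signed_coeff d Q n m - Poly_Mapping.lookup p (exps n m)"
    using \<sigma>_sq unfolding signed_coeff_def \<sigma>_def e_def by (simp add: algebra_simps)
  also have "\<dots> \<le> signed_coeff d Q n m" using p unfolding Hclass_def by simp
  finally show ?thesis .
qed

lemma signed_coeff_superadditive_array:
  assumes "p \<in> Hclass n d" and "induced d p = Ssum n * Q"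
  shows "superadditive_array {1..n} d (signed_coeff d Q n)"
proof
  fix m :: "nat \<Rightarrow> int"
  assume "(\<exists>i\<in>{1..n}. m i < 0) \<or> int d \<le> (\<Sum>i\<in>{1..n}. m i)"
  then show "signed_coeff d Q n m = 0" by (rule signed_coeff_vanish)
next
  fix m :: "nat \<Rightarrow> int"
  assume "\<forall>i\<in>{1..n}. 0 \<le> m i" and "(\<Sum>i\<in>{1..n}. m i) \<le> int d" and "\<exists>i\<in>{1..n}. m i \<noteq> 0"
  then show "(\<Sum>i\<in>{1..n}. signed_coeff d Q n (m - unit_vec i)) \<le> signed_coeff d Q n m"
    by (rule signed_coeff_superadd[OF assms])
qed simp

lemma signed_coeff_cong:
  "(\<And>i. i \<in> {1..n} \<Longrightarrow> m i = m' i) \<Longrightarrow> signed_coeff d Q n m = signed_coeff d Q n m'"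
proof -
  assume agree: "\<And>i. i \<in> {1..n} \<Longrightarrow> m i = m' i"
  then have "(\<Sum>i=1..n. m i) = (\<Sum>i=1..n. m' i)" by (rule sum.cong[OF refl])
  then show ?thesis unfolding signed_coeff_def using ndcoeff_cong[OF agree] by simp
qed

definition coords2 :: "int \<Rightarrow> int \<Rightarrow> nat \<Rightarrow> int" where
  "coords2 a b = (\<lambda>i. if i = 1 then a else if i = 2 then b else 0)"

definition coords3 :: "int \<Rightarrow> int \<Rightarrow> int \<Rightarrow> nat \<Rightarrow> int" where
  "coords3 a b c = (\<lambda>i. if i = 1 then a else if i = 2 then b else if i = 3 then c else 0)"

lemma K2_iff: "(a, b) \<in> K2 d Q \<longleftrightarrow> signed_coeff d Q 2 (coords2 a b) \<noteq> 0"
  unfolding K2_def coords2_def signed_coeff_nonzero_iff by simp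

lemma K3_iff: "(a, b, c) \<in> K3 d Q \<longleftrightarrow> signed_coeff d Q 3 (coords3 a b c) \<noteq> 0"
  unfolding K3_def coords3_def signed_coeff_nonzero_iff by simp

lemma signed_coeff_coords2: "signed_coeff d Q 2 m = signed_coeff d Q 2 (coords2 (m 1) (m 2))"
  by (rule signed_coeff_cong) (auto simp: coords2_def numeral_2_eq_2 le_Suc_eq)

lemma signed_coeff_coords3: "signed_coeff d Q 3 m = signed_coeff d Q 3 (coords3 (m 1) (m 2) (m 3))"
  by (rule signed_coeff_cong) (auto simp: coords3_def numeral_2_eq_2 numeral_3_eq_3 le_Suc_eq)

lemma overhang2_member: "overhang2 K z \<Longrightarrow> z \<in> K"
  unfolding overhang2_def left_overhang_def right_overhang_def by (auto split: prod.splits)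

text \<open>The case \<open>n = 2\<close>: the partition \<open>{1} | {2}\<close> projects identically.\<close>

lemma no_overhang_K2:
  assumes "p \<in> Hclass 2 d" and "induced d p = Ssum 2 * Q"
  shows "\<not> overhang2 (K2 d Q) z"
proof
  interpret superadditive_array "{1..2}" d "signed_coeff d Q 2"
    using signed_coeff_superadditive_array[OF assms] .
  obtain a b where z: "z = (a, b)" by (cases z)
  assume ov: "overhang2 (K2 d Q) z"
  have "\<not> overhang2 (K2 d Q) ((\<Sum>i\<in>{1}. coords2 a b i), (\<Sum>i\<in>{2}. coords2 a b i))"
  proof (rule no_overhang)
    show "signed_coeff d Q 2 (coords2 a b) \<noteq> 0" using overhang2_member[OF ov] z K2_iff by simp
  next
    fix m assume "signed_coeff d Q 2 m \<noteq> 0"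
    then have "(m 1, m 2) \<in> K2 d Q" unfolding K2_iff signed_coeff_coords2[of d Q m] .
    then show "((\<Sum>i\<in>{1}. m i), (\<Sum>i\<in>{2}. m i)) \<in> K2 d Q" by simp
  qed auto
  then show False using ov z by (simp add: coords2_def)
qed

text \<open>The case \<open>n = 3\<close>: each coordinate projection \<open>\<pi>\<^sub>j\<close> is the projection attached to a
  partition of \<open>{1, 2, 3}\<close>.\<close>

lemma no_projected_overhang_K3:
  assumes "p \<in> Hclass 3 d" and "induced d p = Ssum 3 * Q"
    and partition: "A \<union> B = {1, 2, 3}" "A \<inter> B = {}" "A \<noteq> {}" "B \<noteq> {}"
    and proj: "\<And>a b c. \<pi> (a, b, c) = ((\<Sum>i\<in>A. coords3 a b c i), (\<Sum>i\<in>B. coords3 a b c i))"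
    and member: "(a, b, c) \<in> K3 d Q"
  shows "\<not> overhang2 (\<pi> ` K3 d Q) (\<pi> (a, b, c))"
proof -
  interpret superadditive_array "{1..3}" d "signed_coeff d Q 3"
    using signed_coeff_superadditive_array[OF assms(1,2)] .
  have I: "{1..3} = {1, 2, 3 :: nat}" by auto
  have coords3_agree: "coords3 (m 1) (m 2) (m 3) i = m i" if "i \<in> A \<union> B" for m i
    using that partition(1) by (auto simp: coords3_def)
  have sums: "(\<Sum>i\<in>A. coords3 (m 1) (m 2) (m 3) i) = (\<Sum>i\<in>A. m i)"
    "(\<Sum>i\<in>B. coords3 (m 1) (m 2) (m 3) i) = (\<Sum>i\<in>B. m i)" for m
    using coords3_agree by (auto intro!: sum.cong)
  have "\<not> overhang2 (\<pi> ` K3 d Q) ((\<Sum>i\<in>A. coords3 a b c i), (\<Sum>i\<in>B. coords3 a b c i))"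
  proof (rule no_overhang)
    show "signed_coeff d Q 3 (coords3 a b c) \<noteq> 0" using member K3_iff by simp
  next
    fix m assume "signed_coeff d Q 3 m \<noteq> 0"
    then have "(m 1, m 2, m 3) \<in> K3 d Q" unfolding K3_iff signed_coeff_coords3[of d Q m] .
    then show "((\<Sum>i\<in>A. m i), (\<Sum>i\<in>B. m i)) \<in> \<pi> ` K3 d Q"
      using proj[of "m 1" "m 2" "m 3"] sums by (metis image_eqI)
  qed (use partition I in auto)
  then show ?thesis using proj by simp
qed

lemma no_overhang_K3:
  assumes "p \<in> Hclass 3 d" and "induced d p = Ssum 3 * Q"
  shows "\<not> overhang3 (K3 d Q) m"
proof
  obtain a b c where m: "m = (a, b, c)" by (cases m)
  assume ov: "overhang3 (K3 d Q) m"
  then have member: "(a, b, c) \<in> K3 d Q" unfolding overhang3_def m by simp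
  have "\<not> overhang2 (proj1 ` K3 d Q) (proj1 (a, b, c))"
    by (rule no_projected_overhang_K3[OF assms, of "{1}" "{2, 3}"])
       (auto simp: proj1_def coords3_def member)
  moreover have "\<not> overhang2 (proj2 ` K3 d Q) (proj2 (a, b, c))"
    by (rule no_projected_overhang_K3[OF assms, of "{1, 3}" "{2}"])
       (auto simp: proj2_def coords3_def member)
  moreover have "\<not> overhang2 (proj3 ` K3 d Q) (proj3 (a, b, c))"
    by (rule no_projected_overhang_K3[OF assms, of "{1, 2}" "{3}"])
       (auto simp: proj3_def coords3_def member)
  ultimately show False using ov unfolding overhang3_def m by blast
qed

theorem mainTheorem14:
  fixes n d :: nat and p Q :: mpoly
  assumes "n \<in> {2, 3}" and "d \<ge> 1" and "p \<in> Hclass n d"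
    and "induced d p = Ssum n * Q"
  shows "(n = 2 \<longrightarrow> (\<forall>z. \<not> overhang2 (K2 d Q) z))
       \<and> (n = 3 \<longrightarrow> (\<forall>m. \<not> overhang3 (K3 d Q) m))"
  using no_overhang_K2[of p d Q] no_overhang_K3[of p d Q] assms(3,4) by auto

end
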